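(* Let $L \ge 1$ and let $\mathcal{N} = \mathcal{N}(0, I_L)$ denote the $L$-dimensional standard Gaussian distribution. Let $\mathsf{Adv}$ be a class of distinguishers (e.g. all probabilistic polynomial-time adversaries) and let $\varepsilon \ge 0$, $t \ge 1$. Let $\mathcal{W}$ be a latent watermarking scheme, viewed as a distribution on $\mathbb{R}^L$ from which watermarked initial latents $Z \leftarrow \mathcal{W}$ are sampled. Let $\mathcal{W}^{\mathrm{sem}}$ be its SemBind variant: it samples $Z \leftarrow \mathcal{W}$, independently samples randomness determining a sign mask $S \in \{-1,+1\}^L$ and a permutation $\pi$ of $\{1,\dots,L\}$, and outputs $Z^{\mathrm{sem}} = F_{S,\pi}(Z) := P_\pi \,\mathrm{Diag}(S)\, Z$, where $P_\pi$ is the permutation matrix of $\pi$. In the multi-sample setting, the $t$ outputs are $F_{S_i,\pi_i}(Z_i)$, $i=1,\dots,t$, where $Z_1,\dots,Z_t$ are i.i.d. from $\mathcal{W}$ and the pairs $\{(S_i,\pi_i)\}_{i=1}^t$ (which may be arbitrarily correlated or shared across $i$, and may force some entries of $S_i$ to $+1$) are jointly independent of $\{Z_i\}_{i=1}^t$. Then: (1) If $\mathcal{W}$ is single-sample $(\varepsilon,\mathsf{Adv})$-undetectable, then $\mathcal{W}^{\mathrm{sem}}$ is single-sample $(\varepsilon,\mathsf{Adv})$-undetectable. (2) If $\mathcal{W}$ is multi-sample $(t,\varepsilon,\mathsf{Adv})$-undetectable, then $\mathcal{W}^{\mathrm{sem}}$ is multi-sample $(t,\varepsilon,\mathsf{A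dv})$-undetectable.
   Context: Single-sample undetectability: a scheme producing a random vector $Z \in \mathbb{R}^L$ is single-sample $(\varepsilon,\mathsf{Adv})$-undetectable if for every distinguisher $D \in \mathsf{Adv}$, $\bigl|\Pr[D(Z)=1] - \Pr[D(G)=1]\bigr| \le \varepsilon$, where $Z$ is drawn from the scheme and $G \leftarrow \mathcal{N}(0,I_L)$. Multi-sample undetectability: the scheme is multi-sample $(t,\varepsilon,\mathsf{Adv})$-undetectable if for every $D \in \mathsf{Adv}$, $\bigl|\Pr[D(Z_1,\dots,Z_t)=1] - \Pr[D(G_1,\dots,G_t)=1]\bigr| \le \varepsilon$, where $Z_1,\dots,Z_t$ are i.i.d. outputs of the scheme and $G_1,\dots,G_t$ are i.i.d. $\mathcal{N}(0,I_L)$. For the SemBind variant, the relevant outputs are the transformed latents $F_{S,\pi}(Z)$ (resp. $(F_{S_i,\pi_i}(Z_i))_{i=1}^t$), compared against i.i.d. standard Gaussians in the same way. *)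

theory Defs
  imports "HOL-Probability.Probability"
begin

(* Vectors in R^L: functions 'n => real over a finite index type 'n with CARD('n) = L. *)

definition vec_space :: "('n::finite \<Rightarrow> real) measure" where
  "vec_space = (\<Pi>\<^sub>M i\<in>UNIV. (borel :: real measure))"

definition std_gauss :: "('n::finite \<Rightarrow> real) measure" where
  "std_gauss = (\<Pi>\<^sub>M i\<in>UNIV. density lborel std_normal_density)"

definition tuple_space :: "nat \<Rightarrow> (nat \<Rightarrow> 'n::finite \<Rightarrow> real) measure" where
  "tuple_space t = (\<Pi>\<^sub>M i\<in>{..<t}. vec_space)"

definition iid :: "nat \<Rightarrow> ('n::finite \<Rightarrow> real) measure \<Rightarrow> (nat \<Rightarrow> 'n \<Rightarrow> real) measure" where
  "iid t M = (\<Pi>\<^sub>M i\<in>{..<t}. M)"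

(* sign mask encoded as s :: 'n => bool, True meaning -1 *)
definition sign_of :: "bool \<Rightarrow> real" where
  "sign_of b = (if b then -1 else 1)"

(* F_{S,pi}(z) = P_pi Diag(S) z, with (P_pi x)_{pi j} = x_j *)
definition sem_F :: "('n::finite \<Rightarrow> bool) \<times> ('n \<Rightarrow> 'n) \<Rightarrow> ('n \<Rightarrow> real) \<Rightarrow> ('n \<Rightarrow> real)" where
  "sem_F sp z = (\<lambda>i. sign_of (fst sp (inv (snd sp) i)) * z (inv (snd sp) i))"

(* a (randomized) distinguisher on a measurable space M: its acceptance probability
   x \<mapsto> Pr[D(x) = 1], a measurable map into [0,1] *)
definition distinguisher :: "'a measure \<Rightarrow> ('a \<Rightarrow> real) \<Rightarrow> bool" where
  "distinguisher M D \<longleftrightarrow> D \<in> borel_measurable M \<and> (\<forall>x\<in>space M. 0 \<le> D x \<and> D x \<le> 1)"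

definition single_undetectable ::
  "('n::finite \<Rightarrow> real) measure \<Rightarrow> real \<Rightarrow> (('n \<Rightarrow> real) \<Rightarrow> real) set \<Rightarrow> bool" where
  "single_undetectable Z eps Adv \<longleftrightarrow>
     (\<forall>D\<in>Adv. \<bar>(\<integral>x. D x \<partial>Z) - (\<integral>x. D x \<partial>std_gauss)\<bar> \<le> eps)"

definition multi_undetectable_joint ::
  "nat \<Rightarrow> (nat \<Rightarrow> 'n::finite \<Rightarrow> real) measure \<Rightarrow> real \<Rightarrow> ((nat \<Rightarrow> 'n \<Rightarrow> real) \<Rightarrow> real) set \<Rightarrow> bool" where
  "multi_undetectable_joint t J eps Adv \<longleftrightarrow>
     (\<forall>D\<in>Adv. \<bar>(\<integral>x. D x \<partial>J) - (\<integral>x. D x \<partial>iid t std_gauss)\<bar> \<le> eps)"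

definition multi_undetectable ::
  "nat \<Rightarrow> ('n::finite \<Rightarrow> real) measure \<Rightarrow> real \<Rightarrow> ((nat \<Rightarrow> 'n \<Rightarrow> real) \<Rightarrow> real) set \<Rightarrow> bool" where
  "multi_undetectable t W eps Adv \<longleftrightarrow> multi_undetectable_joint t (iid t W) eps Adv"

definition sembind ::
  "('n::finite \<Rightarrow> real) measure \<Rightarrow> (('n \<Rightarrow> bool) \<times> ('n \<Rightarrow> 'n)) pmf \<Rightarrow> ('n \<Rightarrow> real) measure" where
  "sembind W R = distr (W \<Otimes>\<^sub>M measure_pmf R) vec_space (\<lambda>(z, sp). sem_F sp z)"

definition sembind_multi ::
  "nat \<Rightarrow> ('n::finite \<Rightarrow> real) measure \<Rightarrow> (nat \<Rightarrow> ('n \<Rightarrow> bool) \<times> ('n \<Rightarrow> 'n)) pmf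
     \<Rightarrow> (nat \<Rightarrow> 'n \<Rightarrow> real) measure" where
  "sembind_multi t W Rt = distr (iid t W \<Otimes>\<^sub>M measure_pmf Rt) (tuple_space t)
     (\<lambda>(zs, sps). \<lambda>i\<in>{..<t}. sem_F (sps i) (zs i))"

end

theory Submission
  imports Defs
begin

(* Every signed permutation F_{S,pi} preserves N(0, I_L), since the coordinates are i.i.d. and
   symmetric. For a distinguisher D let D' z = E_{(S,pi)} D (F_{S,pi} z). Because Z and (S,pi)
   are independent, Fubini shows that D' accepts samples of W exactly as often as D accepts
   SemBind outputs, while by the invariance D' accepts Gaussian samples exactly as often as D.
   So the advantage of D against the SemBind variant is that of D' against W. With t samples
   the same argument runs on the product space, F_{S_i,pi_i} acting on the i-th component. *)

lemma pair_prob_space_measure_pmf: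
  "prob_space M \<Longrightarrow> pair_prob_space M (measure_pmf R)"
  by (simp add: pair_prob_space_def pair_sigma_finite_def prob_space_imp_sigma_finite
      measure_pmf.prob_space_axioms measure_pmf.sigma_finite_measure_axioms)

lemma integrable_distinguisher_pair_pmf:
  fixes D :: "'a \<Rightarrow> real"
  assumes M: "prob_space M" "sets M = sets X"
    and F: "(\<lambda>(z, p). F p z) \<in> measurable (X \<Otimes>\<^sub>M measure_pmf R) X"
    and D: "distinguisher X D"
  shows "integrable (M \<Otimes>\<^sub>M measure_pmf R) (\<lambda>(z, p). D (F p z))"
proof -
  interpret pair_prob_space M "measure_pmf R"
    using M(1) by (rule pair_prob_space_measure_pmf)
  have F': "(\<lambda>(z, p). F p z) \<in> measurable (M \<Otimes>\<^sub>M measure_pmf R) X"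
    using F by (simp add: measurable_cong_sets[OF sets_pair_measure_cong[OF M(2) refl] refl])
  have "D \<in> borel_measurable X" "\<And>x. x \<in> space X \<Longrightarrow> \<bar>D x\<bar> \<le> 1"
    using D by (auto simp: distinguisher_def)
  then show ?thesis
    using measurable_compose[OF F'] measurable_space[OF F']
    by (intro P.integrable_const_bound[where B=1]) (auto simp: case_prod_beta')
qed

lemma integral_distr_pair_pmf:
  fixes D :: "'a \<Rightarrow> real"
  assumes M: "prob_space M" "sets M = sets X"
    and F: "(\<lambda>(z, p). F p z) \<in> measurable (X \<Otimes>\<^sub>M measure_pmf R) X"
    and D: "distinguisher X D"
  shows "(\<integral>x. D x \<partial>distr (M \<Otimes>\<^sub>M measure_pmf R) X (\<lambda>(z, p). F p z))
       = (\<integral>z. (\<integral>p. D (F p z) \<partial>measure_pmf R) \<partial>M)"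
proof -
  interpret pair_prob_space M "measure_pmf R"
    using M(1) by (rule pair_prob_space_measure_pmf)
  have F': "(\<lambda>(z, p). F p z) \<in> measurable (M \<Otimes>\<^sub>M measure_pmf R) X"
    using F by (simp add: measurable_cong_sets[OF sets_pair_measure_cong[OF M(2) refl] refl])
  have "D \<in> borel_measurable X"
    using D by (simp add: distinguisher_def)
  then show ?thesis
    using integral_distr[OF F'] integral_fst'[OF integrable_distinguisher_pair_pmf[OF M F D]]
    by (simp add: case_prod_beta')
qed

lemma integral_pmf_average_invariant:
  fixes D :: "'a \<Rightarrow> real"
  assumes G: "prob_space G" "sets G = sets X"
    and F: "(\<lambda>(z, p). F p z) \<in> measurable (X \<Otimes>\<^sub>M measure_pmf R) X"
    and G_inv: "\<And>p. p \<in> set_pmf R \<Longrightarrow> distr G X (F p) = G"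
    and D: "distinguisher X D"
  shows "(\<integral>z. (\<integral>p. D (F p z) \<partial>measure_pmf R) \<partial>G) = (\<integral>x. D x \<partial>G)"
proof -
  interpret pair_prob_space G "measure_pmf R"
    using G(1) by (rule pair_prob_space_measure_pmf)
  have Dm: "D \<in> borel_measurable X"
    using D by (simp add: distinguisher_def)
  have invariant: "(\<integral>z. D (F p z) \<partial>G) = (\<integral>x. D x \<partial>G)" if "p \<in> set_pmf R" for p
  proof -
    have "F p \<in> measurable G X"
      using measurable_compose[OF measurable_Pair2' F, of p]
      by (simp add: measurable_cong_sets[OF G(2) refl])
    then show ?thesis
      using integral_distr[OF _ Dm] G_inv[OF that] by metis
  qed
  have "(\<integral>z. (\<integral>p. D (F p z) \<partial>measure_pmf R) \<partial>G)
      = (\<integral>p. (\<integral>z. D (F p z) \<partial>G) \<partial>measure_pmf R)"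
    using Fubini_integral[of "\<lambda>z p. D (F p z)"] integrable_distinguisher_pair_pmf[OF G F D] by simp
  also have "\<dots> = (\<integral>p. (\<integral>x. D x \<partial>G) \<partial>measure_pmf R)"
    by (rule integral_cong_AE) (auto intro: AE_pmfI simp: invariant)
  finally show ?thesis by simp
qed

lemma advantage_distr_pair_pmf_invariant:
  fixes D :: "'a \<Rightarrow> real"
  assumes M: "prob_space M" "sets M = sets X"
    and G: "prob_space G" "sets G = sets X"
    and F: "(\<lambda>(z, p). F p z) \<in> measurable (X \<Otimes>\<^sub>M measure_pmf R) X"
    and G_inv: "\<And>p. p \<in> set_pmf R \<Longrightarrow> distr G X (F p) = G"
    and D: "distinguisher X D"
  shows "(\<integral>x. D x \<partial>distr (M \<Otimes>\<^sub>M measure_pmf R) X (\<lambda>(z, p). F p z)) - (\<integral>x. D x \<partial>G)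
       = (\<integral>z. (\<integral>p. D (F p z) \<partial>measure_pmf R) \<partial>M) - (\<integral>z. (\<integral>p. D (F p z) \<partial>measure_pmf R) \<partial>G)"
  using integral_distr_pair_pmf[OF M F D] integral_pmf_average_invariant[OF G F G_inv D] by simp

lemma measurable_pair_pmf_countable_range:
  assumes I: "countable I" and g: "\<And>p. g p \<in> I"
    and H: "\<And>k. k \<in> I \<Longrightarrow> H k \<in> measurable X Y"
  shows "(\<lambda>(z, p). H (g p) z) \<in> measurable (X \<Otimes>\<^sub>M measure_pmf R) Y"
proof -
  have "(\<lambda>x. (\<lambda>k x. H k (fst x)) (g (snd x)) x) \<in> measurable (X \<Otimes>\<^sub>M measure_pmf R) Y"
  proof (rule measurable_compose_countable'[OF _ _ I])
    show "(\<lambda>x. H k (fst x)) \<in> measurable (X \<Otimes>\<^sub>M measure_pmf R) Y" if "k \<in> I" for k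
      using H[OF that] by measurable
    show "(\<lambda>x. g (snd x)) \<in> measurable (X \<Otimes>\<^sub>M measure_pmf R) (count_space I)"
      using g by (intro measurable_compose[OF measurable_snd]) auto
  qed
  then show ?thesis
    by (simp add: case_prod_beta')
qed

lemma distr_PiM_componentwise_invariant:
  assumes I: "finite I" and M: "prob_space M"
    and f: "\<And>i. i \<in> I \<Longrightarrow> f i \<in> measurable M M"
    and f_inv: "\<And>i. i \<in> I \<Longrightarrow> distr M M (f i) = M"
  shows "distr (PiM I (\<lambda>_. M)) (PiM I (\<lambda>_. M)) (\<lambda>x. \<lambda>i\<in>I. f i (x i)) = PiM I (\<lambda>_. M)"
proof -
  interpret product_sigma_finite "\<lambda>_. M"
    using M unfolding product_sigma_finite_def by (simp add: prob_space_imp_sigma_finite)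
  have meas: "(\<lambda>x. \<lambda>i\<in>I. f i (x i)) \<in> measurable (PiM I (\<lambda>_. M)) (PiM I (\<lambda>_. M))"
    using f by (intro measurable_restrict)
      (auto intro: measurable_compose[OF measurable_component_singleton])
  show ?thesis
  proof (rule PiM_eqI[OF I])
    fix A assume A: "\<And>i. i \<in> I \<Longrightarrow> A i \<in> sets M"
    have preimage: "(\<lambda>x. \<lambda>i\<in>I. f i (x i)) -` Pi\<^sub>E I A \<inter> space (PiM I (\<lambda>_. M))
        = Pi\<^sub>E I (\<lambda>i. f i -` A i \<inter> space M)"
      by (auto simp: space_PiM PiE_iff)
    have "emeasure (distr (PiM I (\<lambda>_. M)) (PiM I (\<lambda>_. M)) (\<lambda>x. \<lambda>i\<in>I. f i (x i))) (Pi\<^sub>E I A)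
        = emeasure (PiM I (\<lambda>_. M)) (Pi\<^sub>E I (\<lambda>i. f i -` A i \<inter> space M))"
      using A I by (subst emeasure_distr[OF meas]) (auto simp: preimage intro!: sets_PiM_I_finite)
    also have "\<dots> = (\<Prod>i\<in>I. emeasure M (f i -` A i \<inter> space M))"
      using A f I by (intro emeasure_PiM) (auto intro: measurable_sets)
    also have "\<dots> = (\<Prod>i\<in>I. emeasure M (A i))"
      using A f f_inv by (intro prod.cong refl) (metis emeasure_distr)
    finally show "emeasure (distr (PiM I (\<lambda>_. M)) (PiM I (\<lambda>_. M)) (\<lambda>x. \<lambda>i\<in>I. f i (x i))) (Pi\<^sub>E I A)
        = (\<Prod>i\<in>I. emeasure M (A i))" .
  qed simp
qed

abbreviation std_normal_measure :: "real measure" where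
  "std_normal_measure \<equiv> density lborel std_normal_density"

lemma prob_space_std_normal_measure: "prob_space std_normal_measure"
  using prob_space_normal_density by simp

lemma distr_std_normal_measure_uminus:
  "distr std_normal_measure std_normal_measure uminus = std_normal_measure"
proof -
  have "density (distr lborel borel uminus) (\<lambda>x. ennreal (std_normal_density x))
      = distr (density lborel (\<lambda>x. ennreal (std_normal_density (- x)))) borel uminus"
    by (rule density_distr) auto
  then have "std_normal_measure = distr std_normal_measure borel uminus"
    by (simp add: lborel_distr_uminus std_normal_density_def)
  then show ?thesis
    by (metis distr_cong sets_density sets_lborel)
qed

lemma distr_std_normal_measure_sign_of:
  "distr std_normal_measure std_normal_measure (\<lambda>x. sign_of b * x) = std_normal_measure"
proof (cases b)
  case True
  then have "distr std_normal_measure std_normal_measure (\<lambda>x. sign_of b * x)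
      = distr std_normal_measure std_normal_measure uminus"
    by (intro distr_cong) (auto simp: sign_of_def)
  then show ?thesis using distr_std_normal_measure_uminus by simp
next
  case False
  then show ?thesis
    by (simp add: sign_of_def)
qed

lemma sets_std_gauss: "sets (std_gauss :: ('n::finite \<Rightarrow> real) measure) = sets vec_space"
  unfolding std_gauss_def vec_space_def by (intro sets_PiM_cong) auto

lemma prob_space_std_gauss: "prob_space (std_gauss :: ('n::finite \<Rightarrow> real) measure)"
  unfolding std_gauss_def by (intro prob_space_PiM prob_space_std_normal_measure)

lemma measurable_sem_F: "sem_F sp \<in> measurable vec_space (vec_space :: ('n::finite \<Rightarrow> real) measure)"
proof -
  have "sem_F sp = (\<lambda>z::'n \<Rightarrow> real. \<lambda>i\<in>UNIV. sign_of (fst sp (inv (snd sp) i)) * z (inv (snd sp) i))"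
    by (auto simp: sem_F_def fun_eq_iff)
  also have "\<dots> \<in> measurable vec_space vec_space"
    unfolding vec_space_def by (intro measurable_restrict)
      (auto intro: measurable_compose[OF measurable_component_singleton])
  finally show ?thesis .
qed

lemma std_gauss_invariant_sem_F:
  fixes s :: "'n::finite \<Rightarrow> bool" and \<pi> :: "'n \<Rightarrow> 'n"
  assumes "bij \<pi>"
  shows "distr std_gauss vec_space (sem_F (s, \<pi>)) = (std_gauss :: ('n \<Rightarrow> real) measure)"
proof -
  define G :: "('n \<Rightarrow> real) measure" where "G = PiM UNIV (\<lambda>_. std_normal_measure)"
  define flip where "flip = (\<lambda>z::'n \<Rightarrow> real. \<lambda>j\<in>UNIV. sign_of (s j) * z j)"
  define permute where "permute = (\<lambda>z::'n \<Rightarrow> real. \<lambda>j\<in>UNIV. z (inv \<pi> j))"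
  have flip: "flip \<in> measurable G G" "distr G G flip = G"
    unfolding flip_def G_def
    by (auto intro!: measurable_restrict measurable_compose[OF measurable_component_singleton]
        distr_PiM_componentwise_invariant
        simp: prob_space_std_normal_measure distr_std_normal_measure_sign_of)
  have "inj (inv \<pi>)"
    using \<open>bij \<pi>\<close> by (simp add: bij_imp_bij_inv bij_is_inj)
  then have permute: "permute \<in> measurable G G" "distr G G permute = G"
    unfolding permute_def G_def
    using distr_PiM_reindex[of UNIV "\<lambda>_. std_normal_measure" "inv \<pi>" UNIV]
      prob_space_std_normal_measure
    by (auto intro!: measurable_restrict measurable_component_singleton)
  have "sem_F (s, \<pi>) = permute \<circ> flip"
    unfolding sem_F_def permute_def flip_def by (auto simp: fun_eq_iff)
  moreover have "G = std_gauss" "sets G = sets vec_space"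
    using sets_std_gauss by (auto simp: G_def std_gauss_def)
  ultimately have "distr std_gauss vec_space (sem_F (s, \<pi>)) = distr (distr G G flip) G permute"
    using distr_distr[OF permute(1) flip(1)] by (metis distr_cong)
  then show ?thesis
    using flip(2) permute(2) \<open>G = std_gauss\<close> by simp
qed

lemma sets_iid: "sets M = sets vec_space \<Longrightarrow> sets (iid t M) = sets (tuple_space t)"
  unfolding iid_def tuple_space_def by (intro sets_PiM_cong) auto

lemma prob_space_iid: "prob_space M \<Longrightarrow> prob_space (iid t M)"
  unfolding iid_def by (intro prob_space_PiM)

lemma measurable_sem_F_tuple:
  "(\<lambda>zs. \<lambda>i\<in>{..<t}. sem_F (sps i) (zs i))
     \<in> measurable (tuple_space t) (tuple_space t :: (nat \<Rightarrow> 'n::finite \<Rightarrow> real) measure)"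
  unfolding tuple_space_def
  by (intro measurable_restrict measurable_compose[OF _ measurable_sem_F]
      measurable_component_singleton) auto

lemma iid_std_gauss_invariant_sem_F:
  fixes sps :: "nat \<Rightarrow> ('n::finite \<Rightarrow> bool) \<times> ('n \<Rightarrow> 'n)"
  assumes "\<forall>i<t. bij (snd (sps i))"
  shows "distr (iid t std_gauss) (tuple_space t) (\<lambda>zs. \<lambda>i\<in>{..<t}. sem_F (sps i) (zs i))
       = (iid t std_gauss :: (nat \<Rightarrow> 'n \<Rightarrow> real) measure)"
proof -
  have "sem_F (sps i) \<in> measurable std_gauss std_gauss" for i
    using measurable_sem_F by (simp add: measurable_cong_sets[OF sets_std_gauss sets_std_gauss])
  moreover have "distr std_gauss std_gauss (sem_F (sps i)) = std_gauss" if "i < t" for i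
    using std_gauss_invariant_sem_F[of "snd (sps i)" "fst (sps i)"] assms that
    by (simp add: distr_cong[OF refl sets_std_gauss])
  ultimately have "distr (iid t std_gauss) (iid t std_gauss) (\<lambda>zs. \<lambda>i\<in>{..<t}. sem_F (sps i) (zs i))
      = (iid t std_gauss :: (nat \<Rightarrow> 'n \<Rightarrow> real) measure)"
    unfolding iid_def by (intro distr_PiM_componentwise_invariant prob_space_std_gauss) auto
  then show ?thesis
    by (simp add: distr_cong[OF refl sets_iid[OF sets_std_gauss]])
qed

lemma sembind_advantage:
  fixes W :: "('n::finite \<Rightarrow> real) measure"
  assumes W: "prob_space W" "sets W = sets vec_space"
    and R_perm: "\<forall>sp\<in>set_pmf R. bij (snd sp)"
    and D: "distinguisher vec_space D"
  shows "(\<integral>x. D x \<partial>sembind W R) - (\<integral>x. D x \<partial>std_gauss)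
       = (\<integral>z. (\<integral>sp. D (sem_F sp z) \<partial>measure_pmf R) \<partial>W)
         - (\<integral>z. (\<integral>sp. D (sem_F sp z) \<partial>measure_pmf R) \<partial>std_gauss)"
  unfolding sembind_def
proof (rule advantage_distr_pair_pmf_invariant[OF W prob_space_std_gauss sets_std_gauss _ _ D])
  show "(\<lambda>(z, sp). sem_F sp z) \<in> measurable (vec_space \<Otimes>\<^sub>M measure_pmf R) vec_space"
    by (rule measurable_pair_pmf_countable_range[where I=UNIV and g="\<lambda>sp. sp"])
      (simp_all add: countable_finite measurable_sem_F)
  show "distr std_gauss vec_space (sem_F sp) = std_gauss" if "sp \<in> set_pmf R" for sp
    using std_gauss_invariant_sem_F[of "snd sp" "fst sp"] R_perm that by simp
qed

lemma sembind_multi_advantage: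
  fixes W :: "('n::finite \<Rightarrow> real) measure"
  assumes W: "prob_space W" "sets W = sets vec_space"
    and Rt_perm: "\<forall>sps\<in>set_pmf Rt. \<forall>i<t. bij (snd (sps i))"
    and D: "distinguisher (tuple_space t) D"
  shows "(\<integral>x. D x \<partial>sembind_multi t W Rt) - (\<integral>x. D x \<partial>iid t std_gauss)
       = (\<integral>zs. (\<integral>sps. D (\<lambda>i\<in>{..<t}. sem_F (sps i) (zs i)) \<partial>measure_pmf Rt) \<partial>iid t W)
         - (\<integral>zs. (\<integral>sps. D (\<lambda>i\<in>{..<t}. sem_F (sps i) (zs i)) \<partial>measure_pmf Rt) \<partial>iid t std_gauss)"
  unfolding sembind_multi_def
proof (rule advantage_distr_pair_pmf_invariant[OF prob_space_iid[OF W(1)] sets_iid[OF W(2)]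
      prob_space_iid[OF prob_space_std_gauss] sets_iid[OF sets_std_gauss] _ _ D])
  \<comment> \<open>The parameters range over an uncountable type, but the map only sees their
      restriction to {..<t}, which takes finitely many values.\<close>
  have "(\<lambda>(zs, sps). \<lambda>i\<in>{..<t}. sem_F (sps i) (zs i))
      = (\<lambda>(zs, sps). \<lambda>i\<in>{..<t}. sem_F (restrict sps {..<t} i) (zs i))"
    by (auto simp: fun_eq_iff)
  also have "\<dots> \<in> measurable (tuple_space t \<Otimes>\<^sub>M measure_pmf Rt) (tuple_space t)"
    by (rule measurable_pair_pmf_countable_range[where I="{..<t} \<rightarrow>\<^sub>E UNIV"
          and g="\<lambda>sps. restrict sps {..<t}" and H="\<lambda>k zs. \<lambda>i\<in>{..<t}. sem_F (k i) (zs i)"])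
      (simp_all add: countable_finite finite_PiE measurable_sem_F_tuple)
  finally show "(\<lambda>(zs, sps). \<lambda>i\<in>{..<t}. sem_F (sps i) (zs i))
      \<in> measurable (tuple_space t \<Otimes>\<^sub>M measure_pmf Rt) (tuple_space t)" .
  show "distr (iid t std_gauss) (tuple_space t) (\<lambda>zs. \<lambda>i\<in>{..<t}. sem_F (sps i) (zs i))
      = iid t std_gauss" if "sps \<in> set_pmf Rt" for sps
    using iid_std_gauss_invariant_sem_F Rt_perm that by blast
qed

theorem theorem1:
  fixes W :: "('n::finite \<Rightarrow> real) measure"
    and R :: "(('n \<Rightarrow> bool) \<times> ('n \<Rightarrow> 'n)) pmf"
    and Rt :: "(nat \<Rightarrow> ('n \<Rightarrow> bool) \<times> ('n \<Rightarrow> 'n)) pmf"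
    and Adv1 :: "(('n \<Rightarrow> real) \<Rightarrow> real) set"
    and Advt :: "((nat \<Rightarrow> 'n \<Rightarrow> real) \<Rightarrow> real) set"
    and eps :: real and t :: nat
  assumes eps: "eps \<ge> 0" and t: "t \<ge> 1"
    and W: "prob_space W" "sets W = sets vec_space"
    and R_perm: "\<forall>sp\<in>set_pmf R. bij (snd sp)"
    and Rt_perm: "\<forall>sps\<in>set_pmf Rt. \<forall>i<t. bij (snd (sps i))"
    and Adv1_dist: "\<forall>D\<in>Adv1. distinguisher vec_space D"
    and Advt_dist: "\<forall>D\<in>Advt. distinguisher (tuple_space t) D"
    and Adv1_closed: "\<forall>D\<in>Adv1. (\<lambda>z. \<integral>sp. D (sem_F sp z) \<partial>measure_pmf R) \<in> Adv1"
    and Advt_closed: "\<forall>D\<in>Advt.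
          (\<lambda>zs. \<integral>sps. D (\<lambda>i\<in>{..<t}. sem_F (sps i) (zs i)) \<partial>measure_pmf Rt) \<in> Advt"
  shows "(single_undetectable W eps Adv1 \<longrightarrow> single_undetectable (sembind W R) eps Adv1)
       \<and> (multi_undetectable t W eps Advt \<longrightarrow>
            multi_undetectable_joint t (sembind_multi t W Rt) eps Advt)"
proof (intro conjI impI)
  assume W_undetectable: "single_undetectable W eps Adv1"
  show "single_undetectable (sembind W R) eps Adv1"
    unfolding single_undetectable_def
  proof
    fix D assume "D \<in> Adv1"
    then show "\<bar>(\<integral>x. D x \<partial>sembind W R) - (\<integral>x. D x \<partial>std_gauss)\<bar> \<le> eps"
      using W_undetectable Adv1_closed sembind_advantage[OF W R_perm] Adv1_dist
      unfolding single_undetectable_def by presburger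
  qed
next
  assume W_undetectable: "multi_undetectable t W eps Advt"
  show "multi_undetectable_joint t (sembind_multi t W Rt) eps Advt"
    unfolding multi_undetectable_joint_def
  proof
    fix D assume "D \<in> Advt"
    then show "\<bar>(\<integral>x. D x \<partial>sembind_multi t W Rt) - (\<integral>x. D x \<partial>iid t std_gauss)\<bar> \<le> eps"
      using W_undetectable Advt_closed sembind_multi_advantage[OF W Rt_perm] Advt_dist
      unfolding multi_undetectable_def multi_undetectable_joint_def by presburger
  qed
qed

end
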